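(* For every nonnegative integer $n$, $${}_{2}F_1\!\left[\begin{matrix}-3n & -3n+\frac12\\ & -4n+\frac23\end{matrix}\,\Big|\,\frac43\right]=\frac{1}{4^n}\,{}_{2}F_1\!\left[\begin{matrix}-n & -n+\frac12\\ & -2n+\frac56\end{matrix}\,\Big|\,1\right].$$
   Context: For complex parameters $\alpha_0,\alpha_1,\beta_1$ and $z\in\mathbb{C}$, ${}_2F_1\!\left[\begin{matrix}\alpha_0&\alpha_1\\&\beta_1\end{matrix}\Big|\,z\right]=\sum_{k\ge0}\frac{(\alpha_0)_k(\alpha_1)_k}{(\beta_1)_k}\frac{z^k}{k!}$, where $(\alpha)_0=1$ and $(\alpha)_k=\alpha(\alpha+1)\cdots(\alpha+k-1)$ for $k\ge1$. Since the first upper parameter is a nonpositive integer ($-3n$, resp. $-n$), both series terminate (at $k=3n$, resp. $k=n$), and the lower parameters are never nonpositive integers, so both sides are finite sums. *)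

theory Defs
  imports Complex_Main
begin

text \<open>Gauss hypergeometric series 2F1 as a formal sum over k; for the terminating
  instances used here (first upper parameter a nonpositive integer) all but finitely
  many terms vanish, so the sum is a finite sum.\<close>
definition hyp2F1 :: "complex \<Rightarrow> complex \<Rightarrow> complex \<Rightarrow> complex \<Rightarrow> complex" where
  "hyp2F1 a0 a1 b1 z =
     (\<Sum>k. pochhammer a0 k * pochhammer a1 k / pochhammer b1 k * z ^ k / of_nat (fact k))"

end

theory Submission
  imports Defs
begin

text \<open>Both sides satisfy first-order recurrences in \<open>n\<close>, obtained by creative telescoping
  (Zeilberger's algorithm): for each side, a fixed combination of the \<open>k\<close>-th summands at
  \<open>n + 1\<close> and at \<open>n\<close> is a difference \<open>G (k + 1) - G k\<close> of a hypergeometric term \<open>G\<close>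
  vanishing at both ends of the summation range, so summing over \<open>k\<close> kills it. The two
  recurrences have the same denominator and numerators differing by the factor 4, and both
  sides equal 1 at \<open>n = 0\<close>.\<close>

definition hyp2F1_term :: "'a \<Rightarrow> 'a \<Rightarrow> 'a \<Rightarrow> 'a \<Rightarrow> nat \<Rightarrow> 'a::field_char_0" where
  "hyp2F1_term a b c z k = pochhammer a k * pochhammer b k / pochhammer c k * z ^ k / of_nat (fact k)"

lemma hyp2F1_term_eq_0:
  assumes "pochhammer a N = 0" "N \<le> k"
  shows "hyp2F1_term a b c z k = 0"
  using pochhammer_eq_0_mono[OF assms] by (simp add: hyp2F1_term_def)

lemma hyp2F1_eq_sum:
  assumes "pochhammer a N = 0"
  shows "hyp2F1 a b c z = (\<Sum>k<N. hyp2F1_term a b c z k)"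
  unfolding hyp2F1_def hyp2F1_term_def[symmetric]
  by (rule suminf_finite) (auto intro: hyp2F1_term_eq_0[OF assms])

lemma pochhammer_ne_0_if_not_Int:
  fixes c :: "'a::field_char_0"
  shows "c \<notin> \<int> \<Longrightarrow> pochhammer c k \<noteq> 0"
  by (auto simp: pochhammer_eq_0_iff)

lemma pochhammer_swap_shift:
  "pochhammer a m * pochhammer (a + of_nat m) k = pochhammer a k * pochhammer (a + of_nat k) m"
  by (metis add.commute pochhammer_product')

lemma hyp2F1_term_Suc:
  fixes a b c z :: "'a::field_char_0"
  assumes "pochhammer c (Suc k) \<noteq> 0"
  shows "hyp2F1_term a b c z (Suc k) * (of_nat k + 1) * (c + of_nat k)
       = hyp2F1_term a b c z k * ((a + of_nat k) * (b + of_nat k) * z)"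
proof -
  define w where "w = c + of_nat k"
  define u :: 'a where "u = of_nat k + 1"
  have poch_Suc: "pochhammer c (Suc k) = pochhammer c k * w"
    and fact_Suc': "of_nat (fact (Suc k)) = u * of_nat (fact k)"
    by (simp_all add: w_def u_def pochhammer_Suc fact_Suc algebra_simps)
  have "pochhammer c k \<noteq> 0" "w \<noteq> 0"
    using assms unfolding poch_Suc by simp_all
  moreover have "u \<noteq> 0"
    unfolding u_def by (metis add.commute of_nat_Suc of_nat_neq_0)
  ultimately
  have "hyp2F1_term a b c z (Suc k) * u * w
       = hyp2F1_term a b c z k * ((a + of_nat k) * (b + of_nat k) * z)"
    unfolding hyp2F1_term_def poch_Suc fact_Suc' pochhammer_Suc[of a] pochhammer_Suc[of b] power_Suc2
    by (simp add: field_simps)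
  then show ?thesis by (simp add: u_def w_def)
qed

lemma hyp2F1_term_shift_upper:
  "pochhammer a s * pochhammer b s * hyp2F1_term (a + of_nat s) (b + of_nat s) c z k
     = hyp2F1_term a b c z k * (pochhammer (a + of_nat k) s * pochhammer (b + of_nat k) s)"
proof -
  have "pochhammer a s * pochhammer b s * (pochhammer (a + of_nat s) k * pochhammer (b + of_nat s) k)
      = pochhammer a k * pochhammer b k * (pochhammer (a + of_nat k) s * pochhammer (b + of_nat k) s)"
    using pochhammer_swap_shift[of a s k] pochhammer_swap_shift[of b s k]
    by (simp add: algebra_simps)
  then show ?thesis
    by (simp add: hyp2F1_term_def algebra_simps divide_inverse)
qed

lemma hyp2F1_term_shift_lower:
  assumes "pochhammer c (m + k) \<noteq> 0"
  shows "pochhammer c m * hyp2F1_term a b c z k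
       = hyp2F1_term a b (c + of_nat m) z k * pochhammer (c + of_nat k) m"
proof -
  have swap: "pochhammer c m * pochhammer (c + of_nat m) k = pochhammer c k * pochhammer (c + of_nat k) m"
    by (rule pochhammer_swap_shift)
  moreover have "pochhammer c m * pochhammer (c + of_nat m) k \<noteq> 0"
    using assms by (simp add: pochhammer_product')
  ultimately have "pochhammer c k \<noteq> 0" "pochhammer (c + of_nat m) k \<noteq> 0"
    by auto
  with swap show ?thesis
    by (simp add: hyp2F1_term_def field_simps)
qed

lemma sum_telescope_hypergeometric:
  fixes B R p :: "nat \<Rightarrow> 'a::comm_ring_1"
  assumes ratio: "\<And>k. B (Suc k) * (of_nat k + 1) * (of_nat k + c) = B k * R k"
    and "B N = 0"
  shows "(\<Sum>k<N. B k * (R k * p (Suc k) - of_nat k * (of_nat k + c - 1) * p k)) = 0"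
proof -
  define G where "G k = B k * of_nat k * (of_nat k + c - 1) * p k" for k
  have "G (Suc k) = B k * R k * p (Suc k)" for k
    by (simp add: G_def algebra_simps flip: ratio)
  then have "(\<Sum>k<N. B k * (R k * p (Suc k) - of_nat k * (of_nat k + c - 1) * p k))
      = (\<Sum>k<N. G (Suc k) - G k)"
    by (intro sum.cong) (simp_all add: G_def algebra_simps)
  also have "\<dots> = G N - G 0"
    by (rule sum_lessThan_telescope)
  finally show ?thesis
    using \<open>B N = 0\<close> by (simp add: G_def)
qed

lemma hyp2F1_creative_telescoping:
  fixes a b c z A C :: complex and p :: "complex \<Rightarrow> complex"
  assumes a: "a = - of_nat N" and "s \<le> N"
    and c: "\<And>k. pochhammer c k \<noteq> 0"
    and certificate: "\<And>k. A * pochhammer (c + of_nat k) m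
          + C * (pochhammer (a + of_nat k) s * pochhammer (b + of_nat k) s)
        = (a + of_nat k) * (b + of_nat k) * z * p (of_nat k + 1)
          - of_nat k * (of_nat k + c + of_nat m - 1) * p (of_nat k)"
  shows "A * pochhammer c m * hyp2F1 a b c z
       + C * pochhammer a s * pochhammer b s * hyp2F1 (a + of_nat s) (b + of_nat s) (c + of_nat m) z = 0"
proof -
  \<comment> \<open>Both summands are polynomial multiples (in \<open>k\<close>) of this hypergeometric term.\<close>
  define B where "B = hyp2F1_term a b (c + of_nat m) z"
  have "pochhammer (c + of_nat m) k \<noteq> 0" for k
    using c[of "m + k"] by (simp add: pochhammer_product')
  then have ratio: "B (Suc k) * (of_nat k + 1) * (of_nat k + (c + of_nat m))
      = B k * ((a + of_nat k) * (b + of_nat k) * z)" for k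
    using hyp2F1_term_Suc[of "c + of_nat m" k a b z] by (simp add: B_def add.commute)
  have a_zero: "pochhammer a (Suc N) = 0"
    using a by (auto simp: pochhammer_eq_0_iff)
  have "a + of_nat s = - of_nat (N - s)"
    using a \<open>s \<le> N\<close> by (simp add: of_nat_diff)
  then have shifted_zero: "pochhammer (a + of_nat s) (Suc N) = 0"
    by (auto simp: pochhammer_eq_0_iff)
  have "B (Suc N) = 0"
    unfolding B_def using a_zero by (rule hyp2F1_term_eq_0) simp
  have lower: "pochhammer c m * hyp2F1_term a b c z k = B k * pochhammer (c + of_nat k) m" for k
    unfolding B_def by (rule hyp2F1_term_shift_lower[OF c])
  have upper: "pochhammer a s * pochhammer b s * hyp2F1_term (a + of_nat s) (b + of_nat s) (c + of_nat m) z k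
      = B k * (pochhammer (a + of_nat k) s * pochhammer (b + of_nat k) s)" for k
    unfolding B_def by (rule hyp2F1_term_shift_upper)
  have summand: "A * (pochhammer c m * hyp2F1_term a b c z k)
      + C * (pochhammer a s * pochhammer b s * hyp2F1_term (a + of_nat s) (b + of_nat s) (c + of_nat m) z k)
      = B k * ((a + of_nat k) * (b + of_nat k) * z * p (of_nat (Suc k))
          - of_nat k * (of_nat k + (c + of_nat m) - 1) * p (of_nat k))" for k
  proof -
    have "A * (pochhammer c m * hyp2F1_term a b c z k)
        + C * (pochhammer a s * pochhammer b s * hyp2F1_term (a + of_nat s) (b + of_nat s) (c + of_nat m) z k)
        = B k * (A * pochhammer (c + of_nat k) m
            + C * (pochhammer (a + of_nat k) s * pochhammer (b + of_nat k) s))"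
      unfolding lower upper by (simp add: algebra_simps)
    then show ?thesis
      by (simp add: certificate add.commute add.left_commute)
  qed
  have "A * pochhammer c m * hyp2F1 a b c z
       + C * pochhammer a s * pochhammer b s * hyp2F1 (a + of_nat s) (b + of_nat s) (c + of_nat m) z
      = (\<Sum>k<Suc N. A * (pochhammer c m * hyp2F1_term a b c z k)
       + C * (pochhammer a s * pochhammer b s * hyp2F1_term (a + of_nat s) (b + of_nat s) (c + of_nat m) z k))"
    unfolding hyp2F1_eq_sum[OF a_zero] hyp2F1_eq_sum[OF shifted_zero]
    by (simp only: sum_distrib_left sum.distrib mult.assoc)
  also have "\<dots> = (\<Sum>k<Suc N. B k * ((a + of_nat k) * (b + of_nat k) * z * p (of_nat (Suc k))
          - of_nat k * (of_nat k + (c + of_nat m) - 1) * p (of_nat k)))"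
    by (simp only: summand)
  also have "\<dots> = 0"
    by (rule sum_telescope_hypergeometric[OF ratio \<open>B (Suc N) = 0\<close>])
  finally show ?thesis .
qed

lemma lhs_series_recurrence:
  fixes n :: nat
  shows "(12 * of_nat n + 7) * (12 * of_nat n + 1) *
      hyp2F1 (- 3 * of_nat (Suc n)) (- 3 * of_nat (Suc n) + 1/2) (- 4 * of_nat (Suc n) + 2/3) (4/3)
    = (3 * of_nat n + 2) * (6 * of_nat n + 1) / 2 *
      hyp2F1 (- 3 * of_nat n) (- 3 * of_nat n + 1/2) (- 4 * of_nat n + 2/3) (4/3)"
    (is "?Q * ?S' = ?P * ?S")
proof -
  define x where "x = (of_nat n :: complex)"
  define K :: complex where "K = 3/4 * of_nat ((n + 1) * (2 * n + 1) * (6 * n + 5) * (3 * n + 1))"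
  \<comment> \<open>The certificate \<open>A\<close>, \<open>p\<close> was computed by Zeilberger's algorithm.\<close>
  define A where "A = -243/32 * (x + 1) * (2 * x + 1)"
  define p where "p k = (-27/2 - 2175/16*x - 7371/16*x^2 - 1269/2*x^3 - 1215/4*x^4)
     + (329/32 + 3147/32*x + 3987/16*x^2 + 729/4*x^3) * k
     + (175/32 - 27/32*x - 297/16*x^2) * k^2 + (-11/2 - 6*x) * k^3 + k^4" for k :: complex
  have "A * pochhammer (- 4 * of_nat (Suc n) + 2/3) 4 * ?S'
      + 1/3 * pochhammer (- 3 * of_nat (Suc n)) 3 * pochhammer (- 3 * of_nat (Suc n) + 1/2) 3 *
        hyp2F1 (- 3 * of_nat (Suc n) + of_nat 3) (- 3 * of_nat (Suc n) + 1/2 + of_nat 3)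
          (- 4 * of_nat (Suc n) + 2/3 + of_nat 4) (4/3) = 0"
  proof (rule hyp2F1_creative_telescoping[where N = "3 * n + 3" and p = p])
    show "pochhammer (- 4 * of_nat (Suc n) + 2/3 :: complex) k \<noteq> 0" for k
      by (rule pochhammer_ne_0_if_not_Int) simp
    show "A * pochhammer (- 4 * of_nat (Suc n) + 2/3 + of_nat k) 4
        + 1/3 * (pochhammer (- 3 * of_nat (Suc n) + of_nat k) 3 * pochhammer (- 3 * of_nat (Suc n) + 1/2 + of_nat k) 3)
      = (- 3 * of_nat (Suc n) + of_nat k) * (- 3 * of_nat (Suc n) + 1/2 + of_nat k) * (4/3) * p (of_nat k + 1)
        - of_nat k * (of_nat k + (- 4 * of_nat (Suc n) + 2/3) + of_nat 4 - 1) * p (of_nat k)" for k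
      unfolding A_def p_def x_def
      by (simp add: numeral_eq_Suc pochhammer_Suc field_simps)
  qed simp_all
  moreover have "- 3 * of_nat (Suc n) + of_nat 3 = (- 3 * of_nat n :: complex)"
    "- 3 * of_nat (Suc n) + 1/2 + of_nat 3 = (- 3 * of_nat n + 1/2 :: complex)"
    "- 4 * of_nat (Suc n) + 2/3 + of_nat 4 = (- 4 * of_nat n + 2/3 :: complex)"
    by simp_all
  ultimately have rec: "A * pochhammer (- 4 * of_nat (Suc n) + 2/3) 4 * ?S'
      + 1/3 * pochhammer (- 3 * of_nat (Suc n)) 3 * pochhammer (- 3 * of_nat (Suc n) + 1/2) 3 * ?S = 0"
    by (simp only:)
  have "A * pochhammer (- 4 * of_nat (Suc n) + 2/3) 4 = - K * ?Q"
    and "1/3 * pochhammer (- 3 * of_nat (Suc n)) 3 * pochhammer (- 3 * of_nat (Suc n) + 1/2) 3 = K * ?P"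
    unfolding A_def K_def x_def by (simp_all add: numeral_eq_Suc pochhammer_Suc field_simps)
  with rec have "K * (?P * ?S - ?Q * ?S') = 0"
    by algebra
  moreover have "K \<noteq> 0"
    unfolding K_def by (simp only: of_nat_eq_0_iff mult_eq_0_iff) simp
  ultimately show ?thesis
    by simp
qed

lemma rhs_series_recurrence:
  fixes n :: nat
  shows "(12 * of_nat n + 7) * (12 * of_nat n + 1) *
      hyp2F1 (- of_nat (Suc n)) (- of_nat (Suc n) + 1/2) (- 2 * of_nat (Suc n) + 5/6) 1
    = 2 * (3 * of_nat n + 2) * (6 * of_nat n + 1) *
      hyp2F1 (- of_nat n) (- of_nat n + 1/2) (- 2 * of_nat n + 5/6) 1"
    (is "?Q * ?U' = ?P * ?U")
proof -
  define x where "x = (of_nat n :: complex)"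
  define K :: complex where "K = 1/2 * of_nat ((n + 1) * (2 * n + 1))"
  \<comment> \<open>The certificate \<open>A\<close>, \<open>C\<close>, \<open>p\<close> was computed by Zeilberger's algorithm.\<close>
  define A where "A = -18 * (x + 1) * (2 * x + 1)"
  define C where "C = 2 * (3 * x + 2) * (6 * x + 1)"
  define p where "p k = (-45 - 138 * x - 108 * x^2) + (42 + 72 * x) * k" for k :: complex
  have "A * pochhammer (- 2 * of_nat (Suc n) + 5/6) 2 * ?U'
      + C * pochhammer (- of_nat (Suc n)) 1 * pochhammer (- of_nat (Suc n) + 1/2) 1 *
        hyp2F1 (- of_nat (Suc n) + of_nat 1) (- of_nat (Suc n) + 1/2 + of_nat 1)
          (- 2 * of_nat (Suc n) + 5/6 + of_nat 2) 1 = 0"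
  proof (rule hyp2F1_creative_telescoping[where N = "n + 1" and p = p])
    show "pochhammer (- 2 * of_nat (Suc n) + 5/6 :: complex) k \<noteq> 0" for k
      by (rule pochhammer_ne_0_if_not_Int) simp
    show "A * pochhammer (- 2 * of_nat (Suc n) + 5/6 + of_nat k) 2
        + C * (pochhammer (- of_nat (Suc n) + of_nat k) 1 * pochhammer (- of_nat (Suc n) + 1/2 + of_nat k) 1)
      = (- of_nat (Suc n) + of_nat k) * (- of_nat (Suc n) + 1/2 + of_nat k) * 1 * p (of_nat k + 1)
        - of_nat k * (of_nat k + (- 2 * of_nat (Suc n) + 5/6) + of_nat 2 - 1) * p (of_nat k)" for k
      unfolding A_def C_def p_def x_def
      by (simp add: numeral_eq_Suc pochhammer_Suc field_simps)
  qed simp_all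
  moreover have "- of_nat (Suc n) + of_nat 1 = (- of_nat n :: complex)"
    "- of_nat (Suc n) + 1/2 + of_nat 1 = (- of_nat n + 1/2 :: complex)"
    "- 2 * of_nat (Suc n) + 5/6 + of_nat 2 = (- 2 * of_nat n + 5/6 :: complex)"
    by simp_all
  ultimately have rec: "A * pochhammer (- 2 * of_nat (Suc n) + 5/6) 2 * ?U'
      + C * pochhammer (- of_nat (Suc n)) 1 * pochhammer (- of_nat (Suc n) + 1/2) 1 * ?U = 0"
    by (simp only:)
  have "A * pochhammer (- 2 * of_nat (Suc n) + 5/6) 2 = - K * ?Q"
    and "C * pochhammer (- of_nat (Suc n)) 1 * pochhammer (- of_nat (Suc n) + 1/2) 1 = K * ?P"
    unfolding A_def C_def K_def x_def by (simp_all add: numeral_eq_Suc pochhammer_Suc field_simps)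
  with rec have "K * (?P * ?U - ?Q * ?U') = 0"
    by algebra
  moreover have "K \<noteq> 0"
    unfolding K_def by (simp only: of_nat_eq_0_iff mult_eq_0_iff) simp
  ultimately show ?thesis
    by simp
qed

lemma hyp2F1_0_left: "hyp2F1 0 b c z = 1"
  using hyp2F1_eq_sum[of 0 1] by (simp add: hyp2F1_term_def)

lemma eq_scaled_if_proportional_recurrences:
  fixes f g p q :: "nat \<Rightarrow> 'a::field"
  assumes "\<And>n. q n \<noteq> 0" and "c \<noteq> 0"
    and f: "\<And>n. q n * f (Suc n) = p n * f n"
    and g: "\<And>n. q n * g (Suc n) = c * p n * g n"
    and "f 0 = g 0"
  shows "f n = 1 / c ^ n * g n"
proof (induction n)
  case 0
  show ?case using \<open>f 0 = g 0\<close> by simp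
next
  case (Suc n)
  have "f (Suc n) = p n / q n * f n" and "g (Suc n) = c * p n / q n * g n"
    using f[of n] g[of n] \<open>q n \<noteq> 0\<close> by (simp_all add: field_simps)
  moreover have "c ^ n \<noteq> 0"
    using \<open>c \<noteq> 0\<close> by simp
  ultimately show ?case
    using Suc.IH \<open>c \<noteq> 0\<close> by (simp add: field_simps)
qed

theorem lemma2p1:
  fixes n :: nat
  shows "hyp2F1 (- 3 * of_nat n) (- 3 * of_nat n + 1/2) (- 4 * of_nat n + 2/3) (4/3)
       = 1 / 4 ^ n * hyp2F1 (- of_nat n) (- of_nat n + 1/2) (- 2 * of_nat n + 5/6) 1"
proof (rule eq_scaled_if_proportional_recurrences)
  fix n :: nat
  have "(12 * of_nat n + 7) * (12 * of_nat n + 1) = (of_nat ((12 * n + 7) * (12 * n + 1)) :: complex)"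
    by (simp add: algebra_simps)
  also have "\<dots> \<noteq> 0"
    by (simp only: of_nat_eq_0_iff) simp
  finally show "(12 * of_nat n + 7) * (12 * of_nat n + 1) \<noteq> (0 :: complex)" .
  show "(12 * of_nat n + 7) * (12 * of_nat n + 1) *
      hyp2F1 (- of_nat (Suc n)) (- of_nat (Suc n) + 1/2) (- 2 * of_nat (Suc n) + 5/6) 1
    = 4 * ((3 * of_nat n + 2) * (6 * of_nat n + 1) / 2) *
      hyp2F1 (- of_nat n) (- of_nat n + 1/2) (- 2 * of_nat n + 5/6) 1"
    using rhs_series_recurrence[of n] by simp
qed (rule lhs_series_recurrence | simp add: hyp2F1_0_left)+

end
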